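(* Let $F$ be a field of characteristic not 2 or 3 and $E$ an étale cubic $F$-algebra. Let $v_{0,E}=(1,0,0,-1)\in V_E(F)$. Then \[\mathrm{Stab}_{M_E}(v_{0,E})=\Big\{\begin{pmatrix}\alpha&0\\0&\alpha^{-1}\end{pmatrix}:\alpha\in E^1\Big\}\rtimes\{1,w\}\cong E^1\rtimes\mathbb Z/2\mathbb Z,\qquad w=\begin{pmatrix}0&1\\1&0\end{pmatrix},\] and $\mathrm{Stab}_{\tilde M_E}(v_{0,E})=E^1\rtimes(\mathbb Z/2\mathbb Z\times S_E)$. As subgroups of $GL_2(E)^0\rtimes S_E(F)$ (under the fixed isomorphism $M_E(F)\cong GL_2(E)^0$), this stabilizer equals the group of $F$-automorphisms $\mathrm{Aut}_F(E,C_E,Q,\beta)$ of the twisted composition algebra $C_E=E\oplus E$, $Q(x,y)=xy$, $\beta(x,y)=(y^\#,x^\#)$.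
   Context: $E^1=\{\alpha\in E:N_E(\alpha)=1\}$; $x^\#$ is the adjoint with $xx^\#=N_E(x)$. $GL_2(E)^0=\{g\in GL_2(E):\det g\in F^\times\}$; $S_E(F)=\mathrm{Aut}_F(E)$. $\tilde M_E(F)=GL_2(E)^0\rtimes S_E(F)$ acts on $V_E(F)=F\oplus E\oplus E\oplus F$ (cubes $(a,e,f,b)$) as follows: $\sigma\in S_E(F)$ acts by $(a,e,f,b)\mapsto(a,\sigma e,\sigma f,b)$; $\mathrm{diag}(\alpha,\beta)$ with $\alpha\beta\in F^\times$ acts by $(a,e,f,b)\mapsto(\alpha^\#\beta^{-1}a,\alpha^\#\alpha^{-1}e,\beta^\#\beta^{-1}f,\beta^\#\alpha^{-1}b)$; $w$ acts by $(a,e,f,b)\mapsto(-b,-f,-e,-a)$; the full action is the $F$-form (via Galois descent along $E\otimes\bar F\cong\bar F^3$) of the split action of $(GL_2^3)^0$ on $F^2\otimes F^2\otimes F^2$ by $d^{-1}g_1\otimes g_2\otimes g_3$ ($d$ the common determinant), with $a,b$ the coefficients of $u_1^{\otimes3},u_2^{\otimes3}$, $e_i$ (resp. $f_i$) the coefficient of the basis vector with $u_2$ (resp. $u_1$) in the $i$-th factor and $u_1$ (resp. $u_2$) elsewhere. An $F$-automorphism of $C_E$ is a pair $(\phi,\sigma)$, $\sigma\in\mathrm{Aut}_F(E)$, $\phi$ $F$-linear bijective with $\phi(av)=\sigma(a)\phi(v)$, $\sigma\circ Q=Q\circ\phi$, $\phi\circ\beta=\beta\circ\phi$; it is viewed in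 $GL_2(E)\rtimes S_E(F)$ by writing $\phi$ as an $E$-linear map composed with $\sigma$ acting coordinatewise on $E^2$. *)

theory Defs
  imports Main
begin

text \<open>Setting: F is a field (type 'f), E a commutative ring (type 'e), and
\<iota> :: 'f \<Rightarrow> 'e the structure map making E an F-algebra.
Scalar multiplication c . x is \<iota> c * x.\<close>

definition basis3 :: "('f::field \<Rightarrow> 'e::comm_ring_1) \<Rightarrow> 'e \<times> 'e \<times> 'e \<Rightarrow> bool" where
  "basis3 \<iota> B \<longleftrightarrow> (case B of (b0, b1, b2) \<Rightarrow>
     (\<forall>x. \<exists>!c::'f \<times> 'f \<times> 'f.
        x = \<iota> (fst c) * b0 + \<iota> (fst (snd c)) * b1 + \<iota> (snd (snd c)) * b2))"

definition cubic_alg :: "('f::field \<Rightarrow> 'e::comm_ring_1) \<Rightarrow> bool" where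
  "cubic_alg \<iota> \<longleftrightarrow> inj \<iota> \<and> \<iota> 1 = 1 \<and>
     (\<forall>c d. \<iota> (c + d) = \<iota> c + \<iota> d) \<and> (\<forall>c d. \<iota> (c * d) = \<iota> c * \<iota> d) \<and>
     (\<exists>B. basis3 \<iota> B)"

definition theB :: "('f::field \<Rightarrow> 'e::comm_ring_1) \<Rightarrow> 'e \<times> 'e \<times> 'e" where
  "theB \<iota> = (SOME B. basis3 \<iota> B)"

definition bvec :: "('f::field \<Rightarrow> 'e::comm_ring_1) \<Rightarrow> nat \<Rightarrow> 'e" where
  "bvec \<iota> j = (case theB \<iota> of (b0, b1, b2) \<Rightarrow> (if j = 0 then b0 else if j = 1 then b1 else b2))"

definition coord :: "('f::field \<Rightarrow> 'e::comm_ring_1) \<Rightarrow> 'e \<Rightarrow> nat \<Rightarrow> 'f" where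
  "coord \<iota> x i = (let c = (THE c::'f \<times> 'f \<times> 'f.
        x = \<iota> (fst c) * bvec \<iota> 0 + \<iota> (fst (snd c)) * bvec \<iota> 1 + \<iota> (snd (snd c)) * bvec \<iota> 2)
     in if i = 0 then fst c else if i = 1 then fst (snd c) else snd (snd c))"

definition mm :: "('f::field \<Rightarrow> 'e::comm_ring_1) \<Rightarrow> 'e \<Rightarrow> nat \<Rightarrow> nat \<Rightarrow> 'f" where
  "mm \<iota> x i j = coord \<iota> (x * bvec \<iota> j) i"

text \<open>Norm, trace and second coefficient of the characteristic polynomial
  t^3 - T(x) t^2 + S(x) t - N(x) of multiplication by x.\<close>
definition nrm :: "('f::field \<Rightarrow> 'e::comm_ring_1) \<Rightarrow> 'e \<Rightarrow> 'f" where
  "nrm \<iota> x = (let m = mm \<iota> x in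
      m 0 0 * (m 1 1 * m 2 2 - m 1 2 * m 2 1)
    - m 0 1 * (m 1 0 * m 2 2 - m 1 2 * m 2 0)
    + m 0 2 * (m 1 0 * m 2 1 - m 1 1 * m 2 0))"

definition trc :: "('f::field \<Rightarrow> 'e::comm_ring_1) \<Rightarrow> 'e \<Rightarrow> 'f" where
  "trc \<iota> x = (let m = mm \<iota> x in m 0 0 + m 1 1 + m 2 2)"

definition sq2 :: "('f::field \<Rightarrow> 'e::comm_ring_1) \<Rightarrow> 'e \<Rightarrow> 'f" where
  "sq2 \<iota> x = (let m = mm \<iota> x in
      (m 0 0 * m 1 1 - m 0 1 * m 1 0) + (m 0 0 * m 2 2 - m 0 2 * m 2 0)
    + (m 1 1 * m 2 2 - m 1 2 * m 2 1))"

text \<open>adjoint x^# = x^2 - T(x) x + S(x), so that x * x^# = N(x)\<close>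
definition adj :: "('f::field \<Rightarrow> 'e::comm_ring_1) \<Rightarrow> 'e \<Rightarrow> 'e" where
  "adj \<iota> x = x * x - \<iota> (trc \<iota> x) * x + \<iota> (sq2 \<iota> x)"

definition cr :: "('f::field \<Rightarrow> 'e::comm_ring_1) \<Rightarrow> 'e \<Rightarrow> 'e \<Rightarrow> 'e" where
  "cr \<iota> x y = adj \<iota> (x + y) - adj \<iota> x - adj \<iota> y"

definition etale_cubic :: "('f::field \<Rightarrow> 'e::comm_ring_1) \<Rightarrow> bool" where
  "etale_cubic \<iota> \<longleftrightarrow> cubic_alg \<iota> \<and> (\<forall>x. (\<forall>y. trc \<iota> (x * y) = 0) \<longrightarrow> x = 0)"

definition E1 :: "('f::field \<Rightarrow> 'e::comm_ring_1) \<Rightarrow> 'e set" where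
  "E1 \<iota> = {\<alpha>. nrm \<iota> \<alpha> = 1}"

definition autE :: "('f::field \<Rightarrow> 'e::comm_ring_1) \<Rightarrow> ('e \<Rightarrow> 'e) set" where
  "autE \<iota> = {\<sigma>. bij \<sigma> \<and> (\<forall>x y. \<sigma> (x + y) = \<sigma> x + \<sigma> y) \<and> (\<forall>x y. \<sigma> (x * y) = \<sigma> x * \<sigma> y)
              \<and> (\<forall>c. \<sigma> (\<iota> c) = \<iota> c)}"

text \<open>2x2 matrices over E: (p,q,r,s) stands for [[p,q],[r,s]]\<close>
type_synonym 'e mat2 = "'e \<times> 'e \<times> 'e \<times> 'e"

definition det2 :: "'e::comm_ring_1 mat2 \<Rightarrow> 'e" where
  "det2 g = (case g of (p, q, r, s) \<Rightarrow> p * s - q * r)"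

definition mmul2 :: "'e::comm_ring_1 mat2 \<Rightarrow> 'e mat2 \<Rightarrow> 'e mat2" where
  "mmul2 g h = (case g of (p, q, r, s) \<Rightarrow> case h of (p', q', r', s') \<Rightarrow>
      (p * p' + q * r', p * q' + q * s', r * p' + s * r', r * q' + s * s'))"

definition mvec2 :: "'e::comm_ring_1 mat2 \<Rightarrow> 'e \<times> 'e \<Rightarrow> 'e \<times> 'e" where
  "mvec2 g v = (case g of (p, q, r, s) \<Rightarrow> case v of (x, y) \<Rightarrow> (p * x + q * y, r * x + s * y))"

definition wmat :: "'e::comm_ring_1 mat2" where
  "wmat = (0, 1, 1, 0)"

definition GL2 :: "'e::comm_ring_1 mat2 set" where
  "GL2 = {g. \<exists>u. det2 g * u = 1}"

definition GL20 :: "('f::field \<Rightarrow> 'e::comm_ring_1) \<Rightarrow> 'e mat2 set" where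
  "GL20 \<iota> = {g. \<exists>d. d \<noteq> 0 \<and> det2 g = \<iota> d}"

definition detF :: "('f::field \<Rightarrow> 'e::comm_ring_1) \<Rightarrow> 'e mat2 \<Rightarrow> 'f" where
  "detF \<iota> g = (THE d. det2 g = \<iota> d)"

type_synonym ('f, 'e) cube = "'f \<times> 'e \<times> 'e \<times> 'f"

text \<open>Action of g = [[p,q],[r,s]] in GL_2(E)^0 on V_E(F): the F-form of
  d^{-1} g_1 \<otimes> g_2 \<otimes> g_3, written out in terms of N, Tr, # and \<times>.\<close>
definition act :: "('f::field \<Rightarrow> 'e::comm_ring_1) \<Rightarrow> 'e mat2 \<Rightarrow> ('f, 'e) cube \<Rightarrow> ('f, 'e) cube" where
  "act \<iota> g v = (case g of (p, q, r, s) \<Rightarrow> case v of (a, e, f, b) \<Rightarrow>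
     (let d = inverse (detF \<iota> g) in
      ( d * (nrm \<iota> p * a + trc \<iota> (adj \<iota> p * q * e) + trc \<iota> (p * adj \<iota> q * f) + nrm \<iota> q * b),
        \<iota> d * (\<iota> a * r * adj \<iota> p + s * adj \<iota> p * e + r * cr \<iota> (q * e) p
               + r * adj \<iota> q * f + s * cr \<iota> (p * f) q + \<iota> b * s * adj \<iota> q),
        \<iota> d * (\<iota> a * p * adj \<iota> r + q * adj \<iota> r * e + p * cr \<iota> (s * e) r
               + p * adj \<iota> s * f + q * cr \<iota> (r * f) s + \<iota> b * q * adj \<iota> s),
        d * (nrm \<iota> r * a + trc \<iota> (adj \<iota> r * s * e) + trc \<iota> (r * adj \<iota> s * f) + nrm \<iota> s * b))))"

definition sact :: "('e \<Rightarrow> 'e) \<Rightarrow> ('f, 'e) cube \<Rightarrow> ('f, 'e) cube" where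
  "sact \<sigma> v = (case v of (a, e, f, b) \<Rightarrow> (a, \<sigma> e, \<sigma> f, b))"

definition v0 :: "('f::field, 'e::comm_ring_1) cube" where
  "v0 = (1, 0, 0, -1)"

definition stabM :: "('f::field \<Rightarrow> 'e::comm_ring_1) \<Rightarrow> ('f, 'e) cube \<Rightarrow> 'e mat2 set" where
  "stabM \<iota> v = {g \<in> GL20 \<iota>. act \<iota> g v = v}"

text \<open>Stabilizer in \<tilde>M_E(F) = GL_2(E)^0 \<rtimes> S_E(F); the pair (g,\<sigma>) acts as g \<circ> \<sigma>\<close>
definition stabMt :: "('f::field \<Rightarrow> 'e::comm_ring_1) \<Rightarrow> ('f, 'e) cube \<Rightarrow> ('e mat2 \<times> ('e \<Rightarrow> 'e)) set" where
  "stabMt \<iota> v = {(g, \<sigma>). g \<in> GL20 \<iota> \<and> \<sigma> \<in> autE \<iota> \<and> act \<iota> g (sact \<sigma> v) = v}"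

definition QC :: "'e::comm_ring_1 \<times> 'e \<Rightarrow> 'e" where
  "QC v = fst v * snd v"

definition betaC :: "('f::field \<Rightarrow> 'e::comm_ring_1) \<Rightarrow> 'e \<times> 'e \<Rightarrow> 'e \<times> 'e" where
  "betaC \<iota> v = (adj \<iota> (snd v), adj \<iota> (fst v))"

definition escal :: "'e::comm_ring_1 \<Rightarrow> 'e \<times> 'e \<Rightarrow> 'e \<times> 'e" where
  "escal c v = (c * fst v, c * snd v)"

definition vadd :: "'e::comm_ring_1 \<times> 'e \<Rightarrow> 'e \<times> 'e \<Rightarrow> 'e \<times> 'e" where
  "vadd u v = (fst u + fst v, snd u + snd v)"

definition autC :: "('f::field \<Rightarrow> 'e::comm_ring_1) \<Rightarrow> (('e \<times> 'e \<Rightarrow> 'e \<times> 'e) \<times> ('e \<Rightarrow> 'e)) set" where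
  "autC \<iota> = {(\<phi>, \<sigma>). \<sigma> \<in> autE \<iota> \<and> bij \<phi>
      \<and> (\<forall>u v. \<phi> (vadd u v) = vadd (\<phi> u) (\<phi> v)) \<and> (\<forall>c v. \<phi> (escal (\<iota> c) v) = escal (\<iota> c) (\<phi> v))
      \<and> (\<forall>a v. \<phi> (escal a v) = escal (\<sigma> a) (\<phi> v))
      \<and> (\<forall>v. \<sigma> (QC v) = QC (\<phi> v))
      \<and> (\<forall>v. \<phi> (betaC \<iota> v) = betaC \<iota> (\<phi> v))}"

definition autC_mat :: "('f::field \<Rightarrow> 'e::comm_ring_1) \<Rightarrow> ('e mat2 \<times> ('e \<Rightarrow> 'e)) set" where
  "autC_mat \<iota> = {(A, \<sigma>). A \<in> GL2 \<and> ((\<lambda>v. mvec2 A (\<sigma> (fst v), \<sigma> (snd v))), \<sigma>) \<in> autC \<iota>}"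

end

theory Submission
  imports Defs
begin

(*
  Write g = [[p,q],[r,s]] with det g = d in F^x.  The action formula shows that g fixes
  v0 = (1,0,0,-1) iff N p - N q = d, N r - N s = -d, r p# = s q# and p r# = q s#.  Using
  x x# = N(x), the first pair multiplied out gives r d = q# d and s d = p# d, and similarly
  for the second pair; cancelling the unit d yields r = q#, s = p#, p = s#, q = r#.  Hence p = (p#)# = N(p) p and likewise for q, so each of
  p, q is 0 or of norm 1, and N p - N q = d <> 0 leaves exactly the diagonal matrices
  diag(a, a#) and the antidiagonal ones [[0,a],[a#,0]] with N a = 1.  Automorphisms of E
  fix v0 and commute with # (the only place where 2 <> 0 enters), which splits off S_E.  For an automorphism of C_E, the
  compatibility with beta yields the same four relations, and Q(1,1) = 1 gives
  N p + N q = 1 in place of the determinant condition, so the same case analysis applies.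
*)

definition adjugate3 :: "(nat \<Rightarrow> nat \<Rightarrow> 'a::comm_ring_1) \<Rightarrow> nat \<Rightarrow> nat \<Rightarrow> 'a" where
  "adjugate3 m i j =
     (if i = 0 then (if j = 0 then m 1 1 * m 2 2 - m 1 2 * m 2 1
                     else if j = 1 then m 0 2 * m 2 1 - m 0 1 * m 2 2
                     else m 0 1 * m 1 2 - m 0 2 * m 1 1)
      else if i = 1 then (if j = 0 then m 1 2 * m 2 0 - m 1 0 * m 2 2
                          else if j = 1 then m 0 0 * m 2 2 - m 0 2 * m 2 0
                          else m 0 2 * m 1 0 - m 0 0 * m 1 2)
      else (if j = 0 then m 1 0 * m 2 1 - m 1 1 * m 2 0
            else if j = 1 then m 0 1 * m 2 0 - m 0 0 * m 2 1
            else m 0 0 * m 1 1 - m 0 1 * m 1 0))"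

lemma less_3_cases: "(i::nat) < 3 \<Longrightarrow> i = 0 \<or> i = 1 \<or> i = 2"
  by auto

lemma cross_cancel:
  fixes p q r s a b :: "'a::comm_ring_1"
  assumes "r * a = s * b" and "p * a - q * b = p * s - q * r"
  shows "r * (p * s - q * r) = b * (p * s - q * r)"
    and "s * (p * s - q * r) = a * (p * s - q * r)"
proof -
  have "r * (p * s - q * r) = p * (r * a) - q * r * b"
    unfolding assms(2)[symmetric] by (simp add: algebra_simps)
  also have "\<dots> = b * (p * s - q * r)"
    unfolding assms(1) by (simp add: algebra_simps)
  finally show "r * (p * s - q * r) = b * (p * s - q * r)" .
  have "s * (p * s - q * r) = p * s * a - q * (s * b)"
    unfolding assms(2)[symmetric] by (simp add: algebra_simps)
  also have "\<dots> = a * (p * s - q * r)"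
    unfolding assms(1)[symmetric] by (simp add: algebra_simps)
  finally show "s * (p * s - q * r) = a * (p * s - q * r)" .
qed

definition E1_semidirect_w :: "('f::field \<Rightarrow> 'e::comm_ring_1) \<Rightarrow> 'e mat2 set" where
  "E1_semidirect_w \<iota> =
     {(\<alpha>, 0, 0, \<alpha>') | \<alpha> \<alpha>'. \<alpha> \<in> E1 \<iota> \<and> \<alpha> * \<alpha>' = 1}
   \<union> {mmul2 (\<alpha>, 0, 0, \<alpha>') wmat | \<alpha> \<alpha>'. \<alpha> \<in> E1 \<iota> \<and> \<alpha> * \<alpha>' = 1}"

locale cubic_algebra =
  fixes \<iota> :: "'f::field \<Rightarrow> 'e::comm_ring_1"
  assumes cubic_alg: "cubic_alg \<iota>"
begin

lemma iota_add: "\<iota> (c + d) = \<iota> c + \<iota> d"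
  and iota_mult: "\<iota> (c * d) = \<iota> c * \<iota> d"
  and iota_one [simp]: "\<iota> 1 = 1"
  and inj_iota: "inj \<iota>"
  using cubic_alg unfolding cubic_alg_def by auto

lemma iota_zero [simp]: "\<iota> 0 = 0"
  using iota_add[of 0 0] by simp

lemma iota_minus: "\<iota> (- c) = - \<iota> c"
  using iota_add[of c "- c"] minus_unique[of "\<iota> c" "\<iota> (- c)"] by simp

lemma iota_diff: "\<iota> (c - d) = \<iota> c - \<iota> d"
  using iota_add[of c "- d"] by (simp add: iota_minus)

lemma iota_eq_iff [simp]: "\<iota> c = \<iota> d \<longleftrightarrow> c = d"
  using inj_iota by (auto dest: injD)

lemma iota_cancel: "D \<noteq> 0 \<Longrightarrow> x * \<iota> D = y * \<iota> D \<Longrightarrow> x = y"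
  by (metis field_class.field_inverse iota_mult iota_one mult.assoc mult.commute mult_1_right)

lemma eq_iota_mult_imp_one:
  assumes "x = \<iota> c * x" and "x \<noteq> 0"
  shows "c = 1"
proof (rule ccontr)
  assume "c \<noteq> 1"
  have "\<iota> (c - 1) * x = 0"
    using assms(1) by (simp add: iota_diff algebra_simps)
  then have "\<iota> (inverse (c - 1) * (c - 1)) * x = 0"
    by (simp add: iota_mult mult.assoc)
  with \<open>c \<noteq> 1\<close> assms(2) show False
    by simp
qed

section \<open>Coordinates and the regular representation\<close>

abbreviation b where "b \<equiv> bvec \<iota>"
abbreviation co where "co \<equiv> coord \<iota>"
abbreviation M where "M \<equiv> mm \<iota>"

lemma basis3_theB: "basis3 \<iota> (theB \<iota>)"
  using cubic_alg unfolding cubic_alg_def theB_def by (metis someI_ex)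

lemma ex1_coordinates:
  "\<exists>!c::'f \<times> 'f \<times> 'f. x = \<iota> (fst c) * b 0 + \<iota> (fst (snd c)) * b 1 + \<iota> (snd (snd c)) * b 2"
  using basis3_theB unfolding basis3_def bvec_def by (cases "theB \<iota>") auto

lemma coord_repr: "x = \<iota> (co x 0) * b 0 + \<iota> (co x 1) * b 1 + \<iota> (co x 2) * b 2"
  using theI'[OF ex1_coordinates[of x]] unfolding coord_def Let_def by simp

lemma coord_unique:
  assumes "x = \<iota> c0 * b 0 + \<iota> c1 * b 1 + \<iota> c2 * b 2"
  shows "co x i = (if i = 0 then c0 else if i = 1 then c1 else c2)"
proof -
  have "(THE c. x = \<iota> (fst c) * b 0 + \<iota> (fst (snd c)) * b 1 + \<iota> (snd (snd c)) * b 2) = (c0, c1, c2)"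
    by (rule the1_equality[OF ex1_coordinates]) (use assms in simp)
  then show ?thesis
    unfolding coord_def Let_def by simp
qed

lemma coord_linear: "co (\<iota> c * x + \<iota> d * y) i = c * co x i + d * co y i"
proof -
  have "\<iota> c * x + \<iota> d * y = \<iota> (c * co x 0 + d * co y 0) * b 0
      + \<iota> (c * co x 1 + d * co y 1) * b 1 + \<iota> (c * co x 2 + d * co y 2) * b 2"
    by (subst (1 2) coord_repr) (simp add: iota_add iota_mult algebra_simps)
  from coord_unique[OF this, of i] show ?thesis
    by (auto simp: coord_def Let_def)
qed

lemma coord_add: "co (x + y) i = co x i + co y i"
  using coord_linear[of 1 x 1 y] by simp

lemma coord_scale: "co (\<iota> c * x) i = c * co x i"
  using coord_linear[of c x 0 0] by simp

lemma coord_zero [simp]: "co 0 i = 0"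
  using coord_scale[of 0 0] by simp

lemma coord_diff: "co (x - y) i = co x i - co y i"
  using coord_linear[of 1 x "- 1" y] by (simp add: iota_minus)

lemma coord_sum3: "co (\<iota> c0 * y0 + \<iota> c1 * y1 + \<iota> c2 * y2) k = c0 * co y0 k + c1 * co y1 k + c2 * co y2 k"
  by (simp add: coord_add coord_scale)

text \<open>Indices beyond 2 refer to the third basis vector and the third coordinate.\<close>
lemma coord_bvec:
  "co (b j) i = (if min i 2 = min j 2 then 1 else 0)"
proof -
  consider "j = 0" | "j = 1" | "j \<ge> 2" by linarith
  then show ?thesis
  proof cases
    case 1
    then have "b j = \<iota> 1 * b 0 + \<iota> 0 * b 1 + \<iota> 0 * b 2" by simp
    from coord_unique[OF this, of i] 1 show ?thesis by simp
  next
    case 2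
    then have "b j = \<iota> 0 * b 0 + \<iota> 1 * b 1 + \<iota> 0 * b 2" by simp
    from coord_unique[OF this, of i] 2 show ?thesis by simp
  next
    case 3
    then have "b j = \<iota> 0 * b 0 + \<iota> 0 * b 1 + \<iota> 1 * b 2"
      by (simp add: bvec_def split: prod.splits)
    from coord_unique[OF this, of i] 3 show ?thesis by (simp add: min_def)
  qed
qed

lemma coord_linear_map:
  assumes "\<And>u v. f (u + v) = f u + f v" and "\<And>c u. f (\<iota> c * u) = \<iota> c * f u"
  shows "co (f z) k = co z 0 * co (f (b 0)) k + co z 1 * co (f (b 1)) k + co z 2 * co (f (b 2)) k"
proof -
  have "f z = \<iota> (co z 0) * f (b 0) + \<iota> (co z 1) * f (b 1) + \<iota> (co z 2) * f (b 2)"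
    by (subst coord_repr) (simp add: assms)
  then show ?thesis
    by (simp only: coord_sum3)
qed

lemma coord_mult: "co (x * y) i = M x i 0 * co y 0 + M x i 1 * co y 1 + M x i 2 * co y 2"
  unfolding mm_def by (subst coord_linear_map[of "(*) x"]) (auto simp: algebra_simps)

lemma mm_mult: "M (x * y) i j = M x i 0 * M y 0 j + M x i 1 * M y 1 j + M x i 2 * M y 2 j"
  using coord_mult[of x "y * b j"] by (simp add: mm_def mult.assoc)

lemma mm_add: "M (x + y) i j = M x i j + M y i j"
  unfolding mm_def by (simp add: distrib_right coord_add)

lemma mm_diff: "M (x - y) i j = M x i j - M y i j"
  unfolding mm_def by (simp add: left_diff_distrib coord_diff)

lemma mm_scale: "M (\<iota> c * x) i j = c * M x i j"
  unfolding mm_def by (simp add: mult.assoc coord_scale)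

lemma mm_iota: "M (\<iota> c) i j = c * co (b j) i"
  using mm_scale[of c 1] unfolding mm_def by simp

lemma mm_eqI:
  assumes "\<And>i j. i < 3 \<Longrightarrow> j < 3 \<Longrightarrow> M x i j = M y i j"
  shows "x = y"
proof -
  have expand: "z = \<iota> (co 1 0) * (\<iota> (M z 0 0) * b 0 + \<iota> (M z 1 0) * b 1 + \<iota> (M z 2 0) * b 2)
      + \<iota> (co 1 1) * (\<iota> (M z 0 1) * b 0 + \<iota> (M z 1 1) * b 1 + \<iota> (M z 2 1) * b 2)
      + \<iota> (co 1 2) * (\<iota> (M z 0 2) * b 0 + \<iota> (M z 1 2) * b 1 + \<iota> (M z 2 2) * b 2)" for z
  proof -
    have "z = z * (\<iota> (co 1 0) * b 0 + \<iota> (co 1 1) * b 1 + \<iota> (co 1 2) * b 2)"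
      using coord_repr[of 1] by simp
    also have "\<dots> = \<iota> (co 1 0) * (z * b 0) + \<iota> (co 1 1) * (z * b 1) + \<iota> (co 1 2) * (z * b 2)"
      by (simp add: algebra_simps)
    finally show ?thesis
      unfolding mm_def using coord_repr[of "z * b 0"] coord_repr[of "z * b 1"] coord_repr[of "z * b 2"]
      by simp
  qed
  show ?thesis
    by (subst expand[of x], subst expand[of y]) (simp add: assms)
qed

text \<open>By Cayley--Hamilton, \<open>x\<^sup>#\<close> acts by the adjugate of the matrix of \<open>x\<close>.\<close>
lemma mm_adj:
  assumes "i < 3" and "j < 3"
  shows "M (adj \<iota> x) i j = adjugate3 (M x) i j"
proof -
  have "M (adj \<iota> x) i j = M (x * x) i j - trc \<iota> x * M x i j + sq2 \<iota> x * co (b j) i"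
    unfolding adj_def by (simp add: mm_add mm_diff mm_scale mm_iota)
  with less_3_cases[OF assms(1)] less_3_cases[OF assms(2)] show ?thesis
    by (elim disjE) (simp_all add: mm_mult trc_def sq2_def Let_def coord_bvec adjugate3_def algebra_simps)
qed

section \<open>Norm and adjoint\<close>

lemma mult_adj: "x * adj \<iota> x = \<iota> (nrm \<iota> x)"
proof (rule mm_eqI)
  fix i j :: nat
  assume ij: "i < 3" "j < 3"
  show "M (x * adj \<iota> x) i j = M (\<iota> (nrm \<iota> x)) i j"
    using less_3_cases[OF ij(1)] less_3_cases[OF ij(2)]
    apply (simp only: mm_mult mm_iota mm_adj)
    by (elim disjE) (simp_all add: nrm_def Let_def coord_bvec adjugate3_def mm_adj algebra_simps)
qed

lemma adj_adj: "adj \<iota> (adj \<iota> x) = \<iota> (nrm \<iota> x) * x"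
proof (rule mm_eqI)
  fix i j :: nat
  assume ij: "i < 3" "j < 3"
  show "M (adj \<iota> (adj \<iota> x)) i j = M (\<iota> (nrm \<iota> x) * x) i j"
    using less_3_cases[OF ij(1)] less_3_cases[OF ij(2)]
    apply (simp only: mm_scale mm_adj ij)
    by (elim disjE) (simp_all add: nrm_def Let_def adjugate3_def mm_adj algebra_simps)
qed

lemma adj_mult: "adj \<iota> (x * y) = adj \<iota> x * adj \<iota> y"
proof -
  have "adj \<iota> (x * y) = adj \<iota> y * adj \<iota> x"
  proof (rule mm_eqI)
    fix i j :: nat
    assume ij: "i < 3" "j < 3"
    show "M (adj \<iota> (x * y)) i j = M (adj \<iota> y * adj \<iota> x) i j"
      using less_3_cases[OF ij(1)] less_3_cases[OF ij(2)]
      apply (simp only: mm_mult mm_adj ij)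
      by (elim disjE) (simp_all add: adjugate3_def mm_mult mm_adj algebra_simps)
  qed
  then show ?thesis
    by (simp add: mult.commute)
qed

lemma nrm_mult: "nrm \<iota> (x * y) = nrm \<iota> x * nrm \<iota> y"
  unfolding nrm_def Let_def mm_mult by (simp add: algebra_simps)

lemma nrm_zero [simp]: "nrm \<iota> 0 = 0"
  unfolding nrm_def mm_def by simp

lemma trc_zero [simp]: "trc \<iota> 0 = 0"
  unfolding trc_def mm_def by simp

lemma adj_zero [simp]: "adj \<iota> 0 = 0"
  unfolding adj_def trc_def sq2_def mm_def by simp

lemma nrm_one [simp]: "nrm \<iota> 1 = 1"
  using mm_iota[of 1] unfolding nrm_def Let_def by (simp add: coord_bvec)

lemma adj_one [simp]: "adj \<iota> 1 = 1"
  using mult_adj[of 1] by simp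

section \<open>Automorphisms of \<open>E\<close>\<close>

lemma autE_simps:
  assumes "\<sigma> \<in> autE \<iota>"
  shows "\<sigma> (u + v) = \<sigma> u + \<sigma> v" "\<sigma> (u * v) = \<sigma> u * \<sigma> v" "\<sigma> (\<iota> c) = \<iota> c"
    "\<sigma> (\<iota> c * u) = \<iota> c * \<sigma> u" "\<sigma> 0 = 0" "\<sigma> 1 = 1" "\<sigma> (u - v) = \<sigma> u - \<sigma> v"
    "\<sigma> (inv \<sigma> u) = u" "inv \<sigma> (\<sigma> u) = u"
proof -
  have add: "\<And>x y. \<sigma> (x + y) = \<sigma> x + \<sigma> y" and mult: "\<And>x y. \<sigma> (x * y) = \<sigma> x * \<sigma> y"
    and iota: "\<And>c. \<sigma> (\<iota> c) = \<iota> c" and "bij \<sigma>"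
    using assms unfolding autE_def by auto
  show "\<sigma> (u + v) = \<sigma> u + \<sigma> v" "\<sigma> (u * v) = \<sigma> u * \<sigma> v" "\<sigma> (\<iota> c) = \<iota> c"
    "\<sigma> (\<iota> c * u) = \<iota> c * \<sigma> u"
    by (simp_all add: add mult iota)
  show "\<sigma> 0 = 0" "\<sigma> 1 = 1"
    using iota[of 0] iota[of 1] by simp_all
  show "\<sigma> (u - v) = \<sigma> u - \<sigma> v"
    using add[of "u - v" v] by (simp add: eq_diff_eq)
  show "\<sigma> (inv \<sigma> u) = u" "inv \<sigma> (\<sigma> u) = u"
    using \<open>bij \<sigma>\<close> by (simp_all add: bij_is_surj surj_f_inv_f bij_is_inj)
qed

lemma inv_autE_simps:
  assumes "\<sigma> \<in> autE \<iota>"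
  shows "inv \<sigma> (u + v) = inv \<sigma> u + inv \<sigma> v" "inv \<sigma> (\<iota> c * u) = \<iota> c * inv \<sigma> u"
  using autE_simps[OF assms] by metis+

text \<open>The matrix of multiplication by \<open>\<sigma> x\<close> is \<open>P \<cdot> M x \<cdot> Q\<close> with \<open>P, Q\<close> the matrices of
  \<open>\<sigma>, \<sigma>\<^sup>-\<^sup>1\<close>; since \<open>Q P = 1\<close>, the trace is unchanged.\<close>
lemma trc_autE:
  assumes "\<sigma> \<in> autE \<iota>"
  shows "trc \<iota> (\<sigma> x) = trc \<iota> x"
proof -
  note \<sigma> = autE_simps[OF assms] and \<sigma>inv = inv_autE_simps[OF assms]
  define P where "P k i = co (\<sigma> (b i)) k" for k i
  define Q where "Q k i = co (inv \<sigma> (b i)) k" for k i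
  have coord_\<sigma>: "co (\<sigma> z) k = co z 0 * P k 0 + co z 1 * P k 1 + co z 2 * P k 2" for z k
    unfolding P_def by (rule coord_linear_map) (simp_all add: \<sigma>)
  have coord_\<sigma>inv: "co (inv \<sigma> z) k = co z 0 * Q k 0 + co z 1 * Q k 1 + co z 2 * Q k 2" for z k
    unfolding Q_def by (rule coord_linear_map) (simp_all add: \<sigma>inv)
  have QP: "Q k 0 * P 0 l + Q k 1 * P 1 l + Q k 2 * P 2 l = co (b l) k" for k l
    using coord_\<sigma>inv[of "\<sigma> (b l)" k] by (simp add: \<sigma> P_def algebra_simps)
  have conj: "M (\<sigma> x) i j = (M x 0 0 * Q 0 j + M x 0 1 * Q 1 j + M x 0 2 * Q 2 j) * P i 0
      + (M x 1 0 * Q 0 j + M x 1 1 * Q 1 j + M x 1 2 * Q 2 j) * P i 1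
      + (M x 2 0 * Q 0 j + M x 2 1 * Q 1 j + M x 2 2 * Q 2 j) * P i 2" for i j
  proof -
    have "\<sigma> x * b j = \<sigma> (x * inv \<sigma> (b j))"
      by (simp add: \<sigma>)
    then have "M (\<sigma> x) i j = co (\<sigma> (x * inv \<sigma> (b j))) i"
      unfolding mm_def by simp
    then show ?thesis
      unfolding coord_\<sigma> coord_mult Q_def by simp
  qed
  have "trc \<iota> (\<sigma> x) =
        M x 0 0 * (Q 0 0 * P 0 0 + Q 0 1 * P 1 0 + Q 0 2 * P 2 0)
      + M x 0 1 * (Q 1 0 * P 0 0 + Q 1 1 * P 1 0 + Q 1 2 * P 2 0)
      + M x 0 2 * (Q 2 0 * P 0 0 + Q 2 1 * P 1 0 + Q 2 2 * P 2 0)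
      + M x 1 0 * (Q 0 0 * P 0 1 + Q 0 1 * P 1 1 + Q 0 2 * P 2 1)
      + M x 1 1 * (Q 1 0 * P 0 1 + Q 1 1 * P 1 1 + Q 1 2 * P 2 1)
      + M x 1 2 * (Q 2 0 * P 0 1 + Q 2 1 * P 1 1 + Q 2 2 * P 2 1)
      + M x 2 0 * (Q 0 0 * P 0 2 + Q 0 1 * P 1 2 + Q 0 2 * P 2 2)
      + M x 2 1 * (Q 1 0 * P 0 2 + Q 1 1 * P 1 2 + Q 1 2 * P 2 2)
      + M x 2 2 * (Q 2 0 * P 0 2 + Q 2 1 * P 1 2 + Q 2 2 * P 2 2)"
    unfolding trc_def Let_def conj by (simp add: algebra_simps)
  also have "\<dots> = trc \<iota> x"
    unfolding QP by (simp add: coord_bvec trc_def Let_def)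
  finally show ?thesis .
qed

lemma sq2_twice: "sq2 \<iota> x * 2 = trc \<iota> x * trc \<iota> x - trc \<iota> (x * x)"
  unfolding sq2_def trc_def Let_def mm_mult by (simp add: algebra_simps)

lemma adj_autE:
  assumes "\<sigma> \<in> autE \<iota>" and "(2::'f) \<noteq> 0"
  shows "\<sigma> (adj \<iota> x) = adj \<iota> (\<sigma> x)"
proof -
  note \<sigma> = autE_simps[OF assms(1)]
  have "sq2 \<iota> (\<sigma> x) * 2 = sq2 \<iota> x * 2"
    unfolding sq2_twice using trc_autE[OF assms(1), of "x * x"] by (simp add: \<sigma> trc_autE[OF assms(1)])
  with assms(2) have "sq2 \<iota> (\<sigma> x) = sq2 \<iota> x"
    by simp
  then show ?thesis
    unfolding adj_def by (simp add: \<sigma> trc_autE[OF assms(1)])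
qed

section \<open>The stabilizer of \<open>v0\<close>\<close>

lemma inverse_of_nrm_one:
  assumes "nrm \<iota> \<alpha> = 1"
  shows "\<alpha> * \<alpha>' = 1 \<longleftrightarrow> \<alpha>' = adj \<iota> \<alpha>"
  using mult_adj[of \<alpha>] assms by (metis iota_one mult.assoc mult.commute mult_1_right)

lemma nrm_adj_of_nrm_one: "nrm \<iota> \<alpha> = 1 \<Longrightarrow> nrm \<iota> (adj \<iota> \<alpha>) = 1"
  using nrm_mult[of \<alpha> "adj \<iota> \<alpha>"] by (simp add: mult_adj)

lemma mem_E1_semidirect_w:
  "g \<in> E1_semidirect_w \<iota> \<longleftrightarrow>
     (\<exists>\<alpha>. nrm \<iota> \<alpha> = 1 \<and> (g = (\<alpha>, 0, 0, adj \<iota> \<alpha>) \<or> g = (0, \<alpha>, adj \<iota> \<alpha>, 0)))"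
  unfolding E1_semidirect_w_def E1_def mmul2_def wmat_def
  using inverse_of_nrm_one by auto

lemma E1_semidirect_wI:
  assumes "p = adj \<iota> s" "s = adj \<iota> p" "q = adj \<iota> r" "r = adj \<iota> q"
    and "p \<noteq> 0 \<or> q \<noteq> 0" and "nrm \<iota> p \<noteq> 1 \<or> nrm \<iota> q \<noteq> 1"
  shows "(p, q, r, s) \<in> E1_semidirect_w \<iota>"
proof -
  have norm_one: "nrm \<iota> x = 1" if "x \<noteq> 0" "adj \<iota> (adj \<iota> x) = x" for x
    using eq_iota_mult_imp_one[of x] that by (simp add: adj_adj)
  have "adj \<iota> (adj \<iota> p) = p" "adj \<iota> (adj \<iota> q) = q"
    using assms(1-4) by metis+
  then consider "q = 0" "nrm \<iota> p = 1" | "p = 0" "nrm \<iota> q = 1"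
    using norm_one assms(5,6) by blast
  then show ?thesis
    unfolding mem_E1_semidirect_w using assms(2,4) by cases auto
qed

lemma detF_eq: "det2 g = \<iota> D \<Longrightarrow> detF \<iota> g = D"
  unfolding detF_def by auto

lemma act_v0:
  assumes "det2 (p, q, r, s) = \<iota> D"
  shows "act \<iota> (p, q, r, s) v0 =
    (inverse D * (nrm \<iota> p - nrm \<iota> q),
     \<iota> (inverse D) * (r * adj \<iota> p - s * adj \<iota> q),
     \<iota> (inverse D) * (p * adj \<iota> r - q * adj \<iota> s),
     inverse D * (nrm \<iota> r - nrm \<iota> s))"
  using detF_eq[OF assms] unfolding act_def v0_def Let_def
  by (simp add: cr_def iota_minus algebra_simps)

lemma stabM_v0_subset:
  assumes "g \<in> stabM \<iota> v0"
  shows "g \<in> E1_semidirect_w \<iota>"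
proof -
  obtain p q r s where g: "g = (p, q, r, s)"
    by (cases g) auto
  from assms obtain D where "D \<noteq> 0" and det_g: "det2 (p, q, r, s) = \<iota> D" and "act \<iota> g v0 = v0"
    unfolding stabM_def GL20_def g by auto
  then have fixed: "act \<iota> (p, q, r, s) v0 = v0" and det: "p * s - q * r = \<iota> D"
    using g by (simp_all add: det2_def)
  have cancel: "x = y" if "\<iota> (inverse D) * x = \<iota> (inverse D) * y" for x y
    using that iota_cancel[of "inverse D" x y] \<open>D \<noteq> 0\<close> by (simp add: mult.commute)
  from fixed[unfolded act_v0[OF det_g]]
  have nrm_pq: "nrm \<iota> p - nrm \<iota> q = D" and nrm_rs: "nrm \<iota> r - nrm \<iota> s = - D"
    and rs: "r * adj \<iota> p = s * adj \<iota> q" and pq: "p * adj \<iota> r = q * adj \<iota> s"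
    using \<open>D \<noteq> 0\<close> cancel by (auto simp: v0_def field_simps)
  have "p * adj \<iota> p - q * adj \<iota> q = p * s - q * r"
    unfolding mult_adj det nrm_pq[symmetric] by (simp add: iota_diff)
  from cross_cancel[OF rs this, unfolded det]
  have "r = adj \<iota> q" "s = adj \<iota> p"
    using iota_cancel \<open>D \<noteq> 0\<close> by blast+
  have det': "r * q - s * p = \<iota> (- D)"
    using det by (simp add: iota_minus algebra_simps)
  have "r * adj \<iota> r - s * adj \<iota> s = r * q - s * p"
    unfolding mult_adj iota_diff[symmetric] nrm_rs det' ..
  from cross_cancel[OF pq this, unfolded det']
  have "p = adj \<iota> s" "q = adj \<iota> r"
    using iota_cancel \<open>D \<noteq> 0\<close> by (metis neg_equal_0_iff_equal)+
  moreover have "p \<noteq> 0 \<or> q \<noteq> 0" "nrm \<iota> p \<noteq> 1 \<or> nrm \<iota> q \<noteq> 1"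
    using nrm_pq \<open>D \<noteq> 0\<close> by auto
  ultimately show ?thesis
    unfolding g using \<open>r = adj \<iota> q\<close> \<open>s = adj \<iota> p\<close> by (intro E1_semidirect_wI)
qed

lemma E1_semidirect_w_subset_stabM:
  assumes "g \<in> E1_semidirect_w \<iota>"
  shows "g \<in> stabM \<iota> v0"
proof -
  obtain \<alpha> where "nrm \<iota> \<alpha> = 1" and g: "g = (\<alpha>, 0, 0, adj \<iota> \<alpha>) \<or> g = (0, \<alpha>, adj \<iota> \<alpha>, 0)"
    using assms unfolding mem_E1_semidirect_w by blast
  then have "nrm \<iota> (adj \<iota> \<alpha>) = 1" and "\<alpha> * adj \<iota> \<alpha> = 1"
    by (simp_all add: nrm_adj_of_nrm_one mult_adj)
  then have diag: "det2 (\<alpha>, 0, 0, adj \<iota> \<alpha>) = \<iota> 1"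
    and antidiag: "det2 (0, \<alpha>, adj \<iota> \<alpha>, 0) = \<iota> (- 1)"
    by (simp_all add: det2_def iota_minus)
  have "act \<iota> (\<alpha>, 0, 0, adj \<iota> \<alpha>) v0 = v0" "act \<iota> (0, \<alpha>, adj \<iota> \<alpha>, 0) v0 = v0"
    unfolding act_v0[OF diag] act_v0[OF antidiag]
    by (simp_all add: \<open>nrm \<iota> \<alpha> = 1\<close> \<open>nrm \<iota> (adj \<iota> \<alpha>) = 1\<close> v0_def)
  with g diag antidiag show ?thesis
    unfolding stabM_def GL20_def by (auto simp del: iota_one)
qed

lemma stabM_v0: "stabM \<iota> v0 = E1_semidirect_w \<iota>"
  using stabM_v0_subset E1_semidirect_w_subset_stabM by blast

lemma stabMt_v0: "stabMt \<iota> v0 = stabM \<iota> v0 \<times> autE \<iota>"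
proof -
  have sact_v0: "sact \<sigma> v0 = v0" if "\<sigma> \<in> autE \<iota>" for \<sigma>
    using autE_simps[OF that] by (simp add: sact_def v0_def)
  show ?thesis
    unfolding stabMt_def stabM_def by (auto simp: sact_v0)
qed

section \<open>Automorphisms of the twisted composition algebra\<close>

lemma bij_mvec2_autE:
  assumes "A \<in> GL2" and "\<sigma> \<in> autE \<iota>"
  shows "bij (\<lambda>v. mvec2 A (\<sigma> (fst v), \<sigma> (snd v)))"
proof -
  obtain p q r s u where A: "A = (p, q, r, s)" and u: "(p * s - q * r) * u = 1"
    using assms(1) unfolding GL2_def det2_def by (cases A) auto
  note \<sigma> = autE_simps[OF assms(2)]
  let ?\<phi> = "\<lambda>v. mvec2 A (\<sigma> (fst v), \<sigma> (snd v))"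
  let ?\<psi> = "\<lambda>(x, y). (inv \<sigma> (u * (s * x - q * y)), inv \<sigma> (u * (p * y - r * x)))"
  have right_inverse: "?\<phi> \<circ> ?\<psi> = id"
  proof
    fix w :: "'e \<times> 'e"
    have "(p * (u * (s * fst w - q * snd w)) + q * (u * (p * snd w - r * fst w)),
           r * (u * (s * fst w - q * snd w)) + s * (u * (p * snd w - r * fst w)))
        = ((p * s - q * r) * u * fst w, (p * s - q * r) * u * snd w)"
      by (simp add: algebra_simps)
    then show "(?\<phi> \<circ> ?\<psi>) w = id w"
      by (cases w) (simp add: A mvec2_def \<sigma> u)
  qed
  have left_inverse: "?\<psi> \<circ> ?\<phi> = id"
  proof
    fix v :: "'e \<times> 'e"
    have "(u * (s * (p * \<sigma> (fst v) + q * \<sigma> (snd v)) - q * (r * \<sigma> (fst v) + s * \<sigma> (snd v))),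
           u * (p * (r * \<sigma> (fst v) + s * \<sigma> (snd v)) - r * (p * \<sigma> (fst v) + q * \<sigma> (snd v))))
        = ((p * s - q * r) * u * \<sigma> (fst v), (p * s - q * r) * u * \<sigma> (snd v))"
      by (simp add: algebra_simps)
    then show "(?\<psi> \<circ> ?\<phi>) v = id v"
      by (cases v) (simp add: A mvec2_def \<sigma> u)
  qed
  show ?thesis
    using o_bij[OF left_inverse right_inverse] .
qed

lemma mem_autC_mat_iff:
  "(A, \<sigma>) \<in> autC_mat \<iota> \<longleftrightarrow> A \<in> GL2 \<and> \<sigma> \<in> autE \<iota>
     \<and> (\<forall>v. \<sigma> (QC v) = QC (mvec2 A (\<sigma> (fst v), \<sigma> (snd v))))
     \<and> (\<forall>v. mvec2 A (\<sigma> (fst (betaC \<iota> v)), \<sigma> (snd (betaC \<iota> v)))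
            = betaC \<iota> (mvec2 A (\<sigma> (fst v), \<sigma> (snd v))))"
proof -
  have "\<sigma> \<in> autE \<iota> \<Longrightarrow> \<phi> (vadd u v) = vadd (\<phi> u) (\<phi> v) \<and> \<phi> (escal a v) = escal (\<sigma> a) (\<phi> v)"
    if "\<phi> = (\<lambda>v. mvec2 A (\<sigma> (fst v), \<sigma> (snd v)))" for \<phi> u v a
    using that by (cases A) (simp add: mvec2_def vadd_def escal_def autE_simps algebra_simps)
  then show ?thesis
    unfolding autC_mat_def autC_def using bij_mvec2_autE[of A \<sigma>] by (auto simp: autE_simps)
qed

lemma autC_mat_subset:
  assumes "(A, \<sigma>) \<in> autC_mat \<iota>"
  shows "A \<in> E1_semidirect_w \<iota>"
proof -
  obtain p q r s where A: "A = (p, q, r, s)"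
    by (cases A) auto
  from assms have "\<sigma> \<in> autE \<iota>"
    and Q: "\<And>v. \<sigma> (QC v) = QC (mvec2 A (\<sigma> (fst v), \<sigma> (snd v)))"
    and \<beta>: "\<And>v. mvec2 A (\<sigma> (fst (betaC \<iota> v)), \<sigma> (snd (betaC \<iota> v))) = betaC \<iota> (mvec2 A (\<sigma> (fst v), \<sigma> (snd v)))"
    unfolding mem_autC_mat_iff by auto
  note \<sigma> = autE_simps[OF \<open>\<sigma> \<in> autE \<iota>\<close>]
  have "p = adj \<iota> s" "r = adj \<iota> q" "q = adj \<iota> r" "s = adj \<iota> p"
    using \<beta>[of "(0, 1)"] \<beta>[of "(1, 0)"] by (simp_all add: betaC_def \<sigma> A mvec2_def)
  have "p * r = 0" "q * s = 0" "(p + q) * (r + s) = 1"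
    using Q[of "(1, 0)"] Q[of "(0, 1)"] Q[of "(1, 1)"] by (simp_all add: QC_def \<sigma> A mvec2_def)
  then have "p * adj \<iota> p + q * adj \<iota> q = 1"
    unfolding \<open>s = adj \<iota> p\<close>[symmetric] \<open>r = adj \<iota> q\<close>[symmetric] by (simp add: algebra_simps)
  then have "\<iota> (nrm \<iota> p + nrm \<iota> q) = \<iota> 1"
    by (simp add: mult_adj iota_add)
  then have "nrm \<iota> p + nrm \<iota> q = 1"
    by (simp only: iota_eq_iff)
  then have "p \<noteq> 0 \<or> q \<noteq> 0"
    by auto
  have "nrm \<iota> p \<noteq> 1 \<or> nrm \<iota> q \<noteq> 1"
    using \<open>nrm \<iota> p + nrm \<iota> q = 1\<close> by (metis add_cancel_right_right one_neq_zero)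
  with \<open>p \<noteq> 0 \<or> q \<noteq> 0\<close> \<open>p = adj \<iota> s\<close> \<open>r = adj \<iota> q\<close> \<open>q = adj \<iota> r\<close> \<open>s = adj \<iota> p\<close> show ?thesis
    unfolding A by (intro E1_semidirect_wI)
qed

lemma E1_semidirect_w_subset_autC_mat:
  assumes "A \<in> E1_semidirect_w \<iota>" and "\<sigma> \<in> autE \<iota>" and "(2::'f) \<noteq> 0"
  shows "(A, \<sigma>) \<in> autC_mat \<iota>"
proof -
  obtain \<alpha> where "nrm \<iota> \<alpha> = 1" and A: "A = (\<alpha>, 0, 0, adj \<iota> \<alpha>) \<or> A = (0, \<alpha>, adj \<iota> \<alpha>, 0)"
    using assms(1) unfolding mem_E1_semidirect_w by blast
  then have unit: "\<alpha> * adj \<iota> \<alpha> = 1" and adj_adj_\<alpha>: "adj \<iota> (adj \<iota> \<alpha>) = \<alpha>"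
    by (simp_all add: mult_adj adj_adj)
  have "A \<in> GL2"
    using A unit unfolding GL2_def det2_def by (auto intro: exI[of _ "- 1"])
  have QC_scaled: "QC (\<alpha> * x, adj \<iota> \<alpha> * y) = x * y" "QC (\<alpha> * y, adj \<iota> \<alpha> * x) = x * y" for x y
    using unit by (simp_all add: QC_def mult.left_commute mult.assoc[symmetric])
  have QC_\<sigma>: "\<sigma> (QC v) = \<sigma> (fst v) * \<sigma> (snd v)" for v
    by (simp add: QC_def autE_simps[OF assms(2)])
  have adj_scaled: "adj \<iota> (\<alpha> * x) = adj \<iota> \<alpha> * adj \<iota> x" "adj \<iota> (adj \<iota> \<alpha> * x) = \<alpha> * adj \<iota> x" for x
    by (simp_all add: adj_mult adj_adj_\<alpha>)
  note simps = mvec2_def betaC_def QC_\<sigma> adj_scaled adj_autE[OF assms(2,3)]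
  from A show ?thesis
  proof
    assume "A = (\<alpha>, 0, 0, adj \<iota> \<alpha>)"
    with \<open>A \<in> GL2\<close> assms(2) show ?thesis
      unfolding mem_autC_mat_iff by (simp add: simps QC_scaled(1))
  next
    assume "A = (0, \<alpha>, adj \<iota> \<alpha>, 0)"
    with \<open>A \<in> GL2\<close> assms(2) show ?thesis
      unfolding mem_autC_mat_iff by (simp add: simps QC_scaled(2))
  qed
qed

lemma autC_mat_eq:
  assumes "(2::'f) \<noteq> 0"
  shows "autC_mat \<iota> = E1_semidirect_w \<iota> \<times> autE \<iota>"
proof (rule set_eqI)
  fix x :: "'e mat2 \<times> ('e \<Rightarrow> 'e)"
  obtain A \<sigma> where x: "x = (A, \<sigma>)"
    by (cases x)
  have "(A, \<sigma>) \<in> autC_mat \<iota> \<Longrightarrow> \<sigma> \<in> autE \<iota>"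
    by (simp add: mem_autC_mat_iff)
  then show "x \<in> autC_mat \<iota> \<longleftrightarrow> x \<in> E1_semidirect_w \<iota> \<times> autE \<iota>"
    unfolding x using autC_mat_subset E1_semidirect_w_subset_autC_mat[OF _ _ assms] by blast
qed

end

theorem proposition7p1:
  fixes \<iota> :: "'f::field \<Rightarrow> 'e::comm_ring_1"
  assumes "(2::'f) \<noteq> 0" and "(3::'f) \<noteq> 0"
    and "etale_cubic \<iota>"
  shows "(stabM \<iota> v0 =
           {(\<alpha>, 0, 0, \<alpha>') | \<alpha> \<alpha>'. \<alpha> \<in> E1 \<iota> \<and> \<alpha> * \<alpha>' = 1}
         \<union> {mmul2 (\<alpha>, 0, 0, \<alpha>') wmat | \<alpha> \<alpha>'. \<alpha> \<in> E1 \<iota> \<and> \<alpha> * \<alpha>' = 1})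
    \<and> (stabMt \<iota> v0 = stabM \<iota> v0 \<times> autE \<iota>)
    \<and> (stabMt \<iota> v0 = autC_mat \<iota>)"
proof -
  interpret cubic_algebra \<iota>
    using assms(3) by unfold_locales (simp add: etale_cubic_def)
  show ?thesis
    using stabM_v0 stabMt_v0 autC_mat_eq[OF assms(1)] unfolding E1_semidirect_w_def by simp
qed

end
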